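(* Let $(\mathcal{C},P)$ be a doctrine with comprehension such that for every $\alpha$ the functor $\lfloor\alpha\rfloor^*$ has a right adjoint $\Pi_{\lfloor\alpha\rfloor}$. If the operation $\alpha\rightarrow\beta:=\Pi_{\lfloor\alpha\rfloor}\lfloor\alpha\rfloor^*\beta$ makes $(\mathcal{C},P)$ implicational (in particular, if it satisfies condition (iv)(c) below), then the comprehension is full. Consequently, for a $\Pi$-doctrine with comprehension which is a restricted $\Pi(\mathcal{C}_P)$-doctrine, this operation provides an implicational structure if and only if comprehension is full.
   Context: A doctrine is a pair $(\mathcal{C},P)$, $\mathcal{C}$ a category with finite products, $P:\mathcal{C}^{op}\to\mathbf{Pos}$ a functor, $f^*=P(f)$. A right adjoint $\Pi_u$ of $u^*$ satisfies $u^*\Pi_u\alpha\le\alpha$, $\beta\le\Pi_uu^*\beta$. Comprehension: every $P(A)$ has a top $\top_A$ and for each $\alpha\in P(A)$ there is $\lfloor\alpha\rfloor:\{\alpha\}\to A$ with $\lfloor\alpha\rfloor^*\alpha=\top_{\{\alpha\}}$ such that every $f:Y\to A$ with $f^*\alpha=\top_Y$ factors uniquely through $\lfloor\alpha\rfloor$; it is full if whenever $\lfloor\alpha\rfloor$ factors through $\lfloor\beta\rfloor$ then $\alpha\le\beta$. $\mathcal{C}_P$ is the class of arrows $\lfloor\alpha\rfloor$. Beck–Chevalley for right adjoints with respect to a pullback-stable class $\mathcal{A}$: for every pullback square $h\circ g=f\circ k$ with $f\in\mathcal{A}$, $h^*\Pi_f\gamma=\Pi_gk^*\gamma$; restricted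 version: only for $\gamma=f^*\xi$. A $\Pi$-doctrine: right adjoints along all product projections satisfying Beck–Chevalley with respect to product projections. Implicational: there is $\rightarrow$ on each $P(A)$ with (ii) $f^*(\alpha\rightarrow\beta)=f^*\alpha\rightarrow f^*\beta$; (iii) $\Pi_{\pi_A}(\pi_A^*\alpha\rightarrow\beta)=\alpha\rightarrow\Pi_{\pi_A}\beta$ for projections $\pi_A:X\times A\to A$; (iv) (a) $\phi\le\psi\rightarrow\phi$; (b) $\gamma\rightarrow(\phi\rightarrow\psi)\le(\gamma\rightarrow\phi)\rightarrow(\gamma\rightarrow\psi)$; (c) if $\gamma\le\phi\rightarrow\psi$ and $\gamma\le\phi$ then $\gamma\le\psi$; (d) if $\phi\le\psi$ then $\gamma\le\phi\rightarrow\psi$. *)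

theory Defs
  imports Main
begin

text \<open>A (small, untyped-carrier) category together with a poset-valued
presheaf P.  Objects live in type 'o, arrows in type 'm; every element of 'm
is an arrow with domain Dm and codomain Cd; composition Cp g f (= g o f) is
meaningful when Dm g = Cd f.  P(A) is the set Pr A ordered by Le A, and
Re f (= f^* ) maps P(Cd f) to P(Dm f).\<close>

record ('o, 'm, 'p) doctrine_data =
  Dm  :: "'m \<Rightarrow> 'o"
  Cd  :: "'m \<Rightarrow> 'o"
  Cp  :: "'m \<Rightarrow> 'm \<Rightarrow> 'm"
  Idt :: "'o \<Rightarrow> 'm"
  Pr  :: "'o \<Rightarrow> 'p set"
  Le  :: "'o \<Rightarrow> 'p \<Rightarrow> 'p \<Rightarrow> bool"
  Re  :: "'m \<Rightarrow> 'p \<Rightarrow> 'p"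

definition category :: "('o, 'm, 'p) doctrine_data \<Rightarrow> bool" where
  "category D \<longleftrightarrow>
     (\<forall>A. Dm D (Idt D A) = A \<and> Cd D (Idt D A) = A) \<and>
     (\<forall>f g. Dm D g = Cd D f \<longrightarrow> Dm D (Cp D g f) = Dm D f \<and> Cd D (Cp D g f) = Cd D g) \<and>
     (\<forall>f. Cp D f (Idt D (Dm D f)) = f \<and> Cp D (Idt D (Cd D f)) f = f) \<and>
     (\<forall>f g h. Dm D g = Cd D f \<and> Dm D h = Cd D g \<longrightarrow>
        Cp D h (Cp D g f) = Cp D (Cp D h g) f)"

definition is_terminal :: "('o, 'm, 'p) doctrine_data \<Rightarrow> 'o \<Rightarrow> bool" where
  "is_terminal D T \<longleftrightarrow> (\<forall>Z. \<exists>!h. Dm D h = Z \<and> Cd D h = T)"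

definition is_product :: "('o, 'm, 'p) doctrine_data \<Rightarrow> 'o \<Rightarrow> 'm \<Rightarrow> 'm \<Rightarrow> bool" where
  "is_product D Y v u \<longleftrightarrow> Dm D v = Y \<and> Dm D u = Y \<and>
     (\<forall>a b. Dm D a = Dm D b \<and> Cd D a = Cd D v \<and> Cd D b = Cd D u \<longrightarrow>
        (\<exists>!h. Dm D h = Dm D a \<and> Cd D h = Y \<and> Cp D v h = a \<and> Cp D u h = b))"

definition has_finite_products :: "('o, 'm, 'p) doctrine_data \<Rightarrow> bool" where
  "has_finite_products D \<longleftrightarrow> (\<exists>T. is_terminal D T) \<and>
     (\<forall>X A. \<exists>Y v u. is_product D Y v u \<and> Cd D v = X \<and> Cd D u = A)"

definition is_projection :: "('o, 'm, 'p) doctrine_data \<Rightarrow> 'm \<Rightarrow> bool" where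
  "is_projection D u \<longleftrightarrow> (\<exists>v. is_product D (Dm D u) v u)"

definition doctrine :: "('o, 'm, 'p) doctrine_data \<Rightarrow> bool" where
  "doctrine D \<longleftrightarrow> category D \<and> has_finite_products D \<and>
     (\<forall>A. (\<forall>x\<in>Pr D A. Le D A x x) \<and>
          (\<forall>x\<in>Pr D A. \<forall>y\<in>Pr D A. \<forall>z\<in>Pr D A. Le D A x y \<and> Le D A y z \<longrightarrow> Le D A x z) \<and>
          (\<forall>x\<in>Pr D A. \<forall>y\<in>Pr D A. Le D A x y \<and> Le D A y x \<longrightarrow> x = y)) \<and>
     (\<forall>f. \<forall>x\<in>Pr D (Cd D f). Re D f x \<in> Pr D (Dm D f)) \<and>
     (\<forall>f. \<forall>x\<in>Pr D (Cd D f). \<forall>y\<in>Pr D (Cd D f).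
          Le D (Cd D f) x y \<longrightarrow> Le D (Dm D f) (Re D f x) (Re D f y)) \<and>
     (\<forall>A. \<forall>x\<in>Pr D A. Re D (Idt D A) x = x) \<and>
     (\<forall>f g. Dm D g = Cd D f \<longrightarrow> (\<forall>x\<in>Pr D (Cd D g). Re D (Cp D g f) x = Re D f (Re D g x)))"

text \<open>Comprehension: tops (stable under reindexing) and, for every
\<alpha> \<in> P(A), an arrow cmp A \<alpha> = \<lfloor>\<alpha>\<rfloor> : {\<alpha>} \<rightarrow> A with the universal property.\<close>
definition has_comprehension ::
  "('o, 'm, 'p) doctrine_data \<Rightarrow> ('o \<Rightarrow> 'p) \<Rightarrow> ('o \<Rightarrow> 'p \<Rightarrow> 'm) \<Rightarrow> bool" where
  "has_comprehension D tp cmp \<longleftrightarrow>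
     (\<forall>A. tp A \<in> Pr D A \<and> (\<forall>x\<in>Pr D A. Le D A x (tp A))) \<and>
     (\<forall>f. Re D f (tp (Cd D f)) = tp (Dm D f)) \<and>
     (\<forall>A. \<forall>\<alpha>\<in>Pr D A. Cd D (cmp A \<alpha>) = A \<and>
        Re D (cmp A \<alpha>) \<alpha> = tp (Dm D (cmp A \<alpha>)) \<and>
        (\<forall>f. Cd D f = A \<and> Re D f \<alpha> = tp (Dm D f) \<longrightarrow>
           (\<exists>!h. Dm D h = Dm D f \<and> Cd D h = Dm D (cmp A \<alpha>) \<and> Cp D (cmp A \<alpha>) h = f)))"

definition full_comprehension ::
  "('o, 'm, 'p) doctrine_data \<Rightarrow> ('o \<Rightarrow> 'p \<Rightarrow> 'm) \<Rightarrow> bool" where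
  "full_comprehension D cmp \<longleftrightarrow>
     (\<forall>A. \<forall>\<alpha>\<in>Pr D A. \<forall>\<beta>\<in>Pr D A.
        (\<exists>h. Dm D h = Dm D (cmp A \<alpha>) \<and> Cd D h = Dm D (cmp A \<beta>) \<and> Cp D (cmp A \<beta>) h = cmp A \<alpha>)
        \<longrightarrow> Le D A \<alpha> \<beta>)"

definition compr_class ::
  "('o, 'm, 'p) doctrine_data \<Rightarrow> ('o \<Rightarrow> 'p \<Rightarrow> 'm) \<Rightarrow> 'm \<Rightarrow> bool" where
  "compr_class D cmp u \<longleftrightarrow> (\<exists>A. \<exists>\<alpha>\<in>Pr D A. u = cmp A \<alpha>)"

definition right_adjoint ::
  "('o, 'm, 'p) doctrine_data \<Rightarrow> 'm \<Rightarrow> ('p \<Rightarrow> 'p) \<Rightarrow> bool" where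
  "right_adjoint D u Pu \<longleftrightarrow>
     (\<forall>x\<in>Pr D (Dm D u). Pu x \<in> Pr D (Cd D u)) \<and>
     (\<forall>x\<in>Pr D (Dm D u). \<forall>y\<in>Pr D (Dm D u). Le D (Dm D u) x y \<longrightarrow> Le D (Cd D u) (Pu x) (Pu y)) \<and>
     (\<forall>x\<in>Pr D (Dm D u). Le D (Dm D u) (Re D u (Pu x)) x) \<and>
     (\<forall>y\<in>Pr D (Cd D u). Le D (Cd D u) y (Pu (Re D u y)))"

definition is_pullback ::
  "('o, 'm, 'p) doctrine_data \<Rightarrow> 'm \<Rightarrow> 'm \<Rightarrow> 'm \<Rightarrow> 'm \<Rightarrow> bool" where
  "is_pullback D h g f k \<longleftrightarrow>
     Dm D h = Cd D g \<and> Dm D f = Cd D k \<and> Cd D h = Cd D f \<and> Dm D g = Dm D k \<and>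
     Cp D h g = Cp D f k \<and>
     (\<forall>a b. Dm D a = Dm D b \<and> Cd D a = Dm D h \<and> Cd D b = Dm D f \<and> Cp D h a = Cp D f b \<longrightarrow>
        (\<exists>!c. Dm D c = Dm D a \<and> Cd D c = Dm D g \<and> Cp D g c = a \<and> Cp D k c = b))"

definition beck_chevalley ::
  "('o, 'm, 'p) doctrine_data \<Rightarrow> ('m \<Rightarrow> bool) \<Rightarrow> ('m \<Rightarrow> 'p \<Rightarrow> 'p) \<Rightarrow> bool" where
  "beck_chevalley D cls Pi \<longleftrightarrow>
     (\<forall>f g h k. cls f \<and> cls g \<and> is_pullback D h g f k \<longrightarrow>
        (\<forall>\<gamma>\<in>Pr D (Dm D f). Re D h (Pi f \<gamma>) = Pi g (Re D k \<gamma>)))"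

definition restricted_beck_chevalley ::
  "('o, 'm, 'p) doctrine_data \<Rightarrow> ('m \<Rightarrow> bool) \<Rightarrow> ('m \<Rightarrow> 'p \<Rightarrow> 'p) \<Rightarrow> bool" where
  "restricted_beck_chevalley D cls Pi \<longleftrightarrow>
     (\<forall>f g h k. cls f \<and> cls g \<and> is_pullback D h g f k \<longrightarrow>
        (\<forall>\<xi>\<in>Pr D (Cd D f). Re D h (Pi f (Re D f \<xi>)) = Pi g (Re D k (Re D f \<xi>))))"

definition Pi_doctrine ::
  "('o, 'm, 'p) doctrine_data \<Rightarrow> ('m \<Rightarrow> 'p \<Rightarrow> 'p) \<Rightarrow> bool" where
  "Pi_doctrine D Pi \<longleftrightarrow> doctrine D \<and>
     (\<forall>u. is_projection D u \<longrightarrow> right_adjoint D u (Pi u)) \<and>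
     beck_chevalley D (is_projection D) Pi"

definition restricted_Pi_class_doctrine ::
  "('o, 'm, 'p) doctrine_data \<Rightarrow> ('m \<Rightarrow> bool) \<Rightarrow> ('m \<Rightarrow> 'p \<Rightarrow> 'p) \<Rightarrow> bool" where
  "restricted_Pi_class_doctrine D cls Pi \<longleftrightarrow> doctrine D \<and>
     (\<forall>u. cls u \<longrightarrow> right_adjoint D u (Pi u)) \<and>
     restricted_beck_chevalley D cls Pi"

definition compr_imp ::
  "('o, 'm, 'p) doctrine_data \<Rightarrow> ('o \<Rightarrow> 'p \<Rightarrow> 'm) \<Rightarrow> ('m \<Rightarrow> 'p \<Rightarrow> 'p) \<Rightarrow> 'o \<Rightarrow> 'p \<Rightarrow> 'p \<Rightarrow> 'p" where
  "compr_imp D cmp Pi A \<alpha> \<beta> = Pi (cmp A \<alpha>) (Re D (cmp A \<alpha>) \<beta>)"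

definition cond_iv_c ::
  "('o, 'm, 'p) doctrine_data \<Rightarrow> ('o \<Rightarrow> 'p \<Rightarrow> 'p \<Rightarrow> 'p) \<Rightarrow> bool" where
  "cond_iv_c D imp \<longleftrightarrow>
     (\<forall>A. \<forall>\<gamma>\<in>Pr D A. \<forall>\<phi>\<in>Pr D A. \<forall>\<psi>\<in>Pr D A.
        Le D A \<gamma> (imp A \<phi> \<psi>) \<and> Le D A \<gamma> \<phi> \<longrightarrow> Le D A \<gamma> \<psi>)"

definition implicational ::
  "('o, 'm, 'p) doctrine_data \<Rightarrow> ('m \<Rightarrow> 'p \<Rightarrow> 'p) \<Rightarrow> ('o \<Rightarrow> 'p \<Rightarrow> 'p \<Rightarrow> 'p) \<Rightarrow> bool" where
  "implicational D Pi imp \<longleftrightarrow>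
     (\<forall>A. \<forall>\<alpha>\<in>Pr D A. \<forall>\<beta>\<in>Pr D A. imp A \<alpha> \<beta> \<in> Pr D A) \<and>
     \<comment> \<open>(ii)\<close>
     (\<forall>f. \<forall>\<alpha>\<in>Pr D (Cd D f). \<forall>\<beta>\<in>Pr D (Cd D f).
        Re D f (imp (Cd D f) \<alpha> \<beta>) = imp (Dm D f) (Re D f \<alpha>) (Re D f \<beta>)) \<and>
     \<comment> \<open>(iii)\<close>
     (\<forall>u. is_projection D u \<longrightarrow> (\<forall>\<alpha>\<in>Pr D (Cd D u). \<forall>\<beta>\<in>Pr D (Dm D u).
        Pi u (imp (Dm D u) (Re D u \<alpha>) \<beta>) = imp (Cd D u) \<alpha> (Pi u \<beta>))) \<and>
     \<comment> \<open>(iv)\<close>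
     (\<forall>A. \<forall>\<gamma>\<in>Pr D A. \<forall>\<phi>\<in>Pr D A. \<forall>\<psi>\<in>Pr D A.
        Le D A \<phi> (imp A \<psi> \<phi>) \<and>
        Le D A (imp A \<gamma> (imp A \<phi> \<psi>)) (imp A (imp A \<gamma> \<phi>) (imp A \<gamma> \<psi>)) \<and>
        (Le D A \<gamma> (imp A \<phi> \<psi>) \<and> Le D A \<gamma> \<phi> \<longrightarrow> Le D A \<gamma> \<psi>) \<and>
        (Le D A \<phi> \<psi> \<longrightarrow> Le D A \<gamma> (imp A \<phi> \<psi>)))"

end

theory Submission
  imports Defs
begin

text \<open>With \<alpha> \<rightarrow> \<beta> := \<Pi>\<lfloor>\<alpha>\<rfloor> \<lfloor>\<alpha>\<rfloor>^* \<beta>, the adjunction gives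
  \<gamma> \<le> \<alpha> \<rightarrow> \<beta> iff \<lfloor>\<alpha>\<rfloor>^* \<gamma> \<le> \<lfloor>\<alpha>\<rfloor>^* \<beta>; in particular \<alpha> \<le> \<alpha> \<rightarrow> \<beta> iff \<lfloor>\<alpha>\<rfloor>^* \<beta> = \<top>, i.e. iff
  \<lfloor>\<alpha>\<rfloor> factors through \<lfloor>\<beta>\<rfloor>. So modus ponens (iv)(c) says exactly that such a factorisation
  forces \<alpha> \<le> \<beta>, which is fullness.
  Conversely, under full comprehension the remaining axioms are checked fibrewise: (ii) is
  Beck-Chevalley for the pullback of \<lfloor>\<alpha>\<rfloor> along f, which is \<lfloor>f^* \<alpha>\<rfloor>; (iii) is Beck-Chevalley
  for the pullback of \<lfloor>\<alpha>\<rfloor> along a projection, which is again a projection; and (iv)(b) follows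
  by reindexing along \<lfloor>\<gamma> \<rightarrow> \<phi>\<rfloor>, where \<gamma> \<rightarrow> \<phi> becomes true and hence \<gamma> \<le> \<phi>.\<close>

locale category_struct =
  fixes D :: "('o, 'm, 'p) doctrine_data"
  assumes category: "category D"
begin

lemma dom_comp: "Dm D g = Cd D f \<Longrightarrow> Dm D (Cp D g f) = Dm D f"
  using category unfolding category_def by blast

lemma cod_comp: "Dm D g = Cd D f \<Longrightarrow> Cd D (Cp D g f) = Cd D g"
  using category unfolding category_def by blast

lemma comp_assoc: "Dm D g = Cd D f \<Longrightarrow> Dm D h = Cd D g \<Longrightarrow> Cp D h (Cp D g f) = Cp D (Cp D h g) f"
  using category unfolding category_def by blast

lemma is_pullbackD:
  assumes "is_pullback D h g f k"
  shows "Dm D h = Cd D g" "Dm D f = Cd D k" "Cd D h = Cd D f" "Dm D g = Dm D k"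
    "Cp D h g = Cp D f k"
    and "\<And>a b. Dm D a = Dm D b \<Longrightarrow> Cd D a = Dm D h \<Longrightarrow> Cd D b = Dm D f \<Longrightarrow>
      Cp D h a = Cp D f b \<Longrightarrow> \<exists>!c. Dm D c = Dm D a \<and> Cd D c = Dm D g \<and> Cp D g c = a \<and> Cp D k c = b"
  using assms unfolding is_pullback_def by blast+

lemma is_pullback_sym:
  assumes pb: "is_pullback D h g f k"
  shows "is_pullback D f k h g"
  unfolding is_pullback_def
proof (intro conjI allI impI)
  show "Dm D f = Cd D k" "Dm D h = Cd D g" "Cd D f = Cd D h" "Dm D k = Dm D g" "Cp D f k = Cp D h g"
    using is_pullbackD(1-5)[OF pb] by simp_all
  fix a b assume ab: "Dm D a = Dm D b \<and> Cd D a = Dm D f \<and> Cd D b = Dm D h \<and> Cp D f a = Cp D h b"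
  then have "\<exists>!c. Dm D c = Dm D b \<and> Cd D c = Dm D g \<and> Cp D g c = b \<and> Cp D k c = a"
    using is_pullbackD(6)[OF pb, of b a] by simp
  then show "\<exists>!c. Dm D c = Dm D a \<and> Cd D c = Dm D k \<and> Cp D k c = a \<and> Cp D g c = b"
    using ab is_pullbackD(4)[OF pb] by (simp add: conj_ac)
qed

lemma is_product_pullback:
  assumes prod: "is_product D (Dm D u) v u" and pb: "is_pullback D c g u k"
  shows "is_product D (Dm D g) (Cp D v k) g"
proof -
  have v: "Dm D v = Dm D u" using prod unfolding is_product_def by blast
  note pb_sq = is_pullbackD(1-5)[OF pb]
  have prod_univ: "\<And>a b. Dm D a = Dm D b \<Longrightarrow> Cd D a = Cd D v \<Longrightarrow> Cd D b = Cd D u \<Longrightarrow>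
      \<exists>!h. Dm D h = Dm D a \<and> Cd D h = Dm D u \<and> Cp D v h = a \<and> Cp D u h = b"
    using prod unfolding is_product_def by blast
  note pb_univ = is_pullbackD(6)[OF pb]
  show ?thesis
    unfolding is_product_def
  proof (intro conjI allI impI)
    show "Dm D (Cp D v k) = Dm D g" using dom_comp v pb_sq by metis
    show "Dm D g = Dm D g" ..
    fix x y assume xy: "Dm D x = Dm D y \<and> Cd D x = Cd D (Cp D v k) \<and> Cd D y = Cd D g"
    have x: "Cd D x = Cd D v" using xy cod_comp v pb_sq by metis
    have cy: "Dm D (Cp D c y) = Dm D y" "Cd D (Cp D c y) = Cd D u"
      using dom_comp cod_comp xy pb_sq by metis+
    obtain m where m: "Dm D m = Dm D x" "Cd D m = Dm D u" "Cp D v m = x" "Cp D u m = Cp D c y"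
      using prod_univ[OF _ x cy(2)] xy cy by metis
    have m_unique: "\<And>m'. Dm D m' = Dm D x \<Longrightarrow> Cd D m' = Dm D u \<Longrightarrow> Cp D v m' = x \<Longrightarrow>
        Cp D u m' = Cp D c y \<Longrightarrow> m' = m"
      using prod_univ[OF _ x cy(2)] xy cy m by metis
    obtain h where h: "Dm D h = Dm D y" "Cd D h = Dm D g" "Cp D g h = y" "Cp D k h = m"
      using pb_univ[of y m] xy m pb_sq by metis
    have h_unique: "\<And>h'. Dm D h' = Dm D y \<Longrightarrow> Cd D h' = Dm D g \<Longrightarrow> Cp D g h' = y \<Longrightarrow>
        Cp D k h' = m \<Longrightarrow> h' = h"
      using pb_univ[of y m] xy m pb_sq h by metis
    show "\<exists>!h. Dm D h = Dm D x \<and> Cd D h = Dm D g \<and> Cp D (Cp D v k) h = x \<and> Cp D g h = y"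
    proof (rule ex1I[of _ h])
      show "Dm D h = Dm D x \<and> Cd D h = Dm D g \<and> Cp D (Cp D v k) h = x \<and> Cp D g h = y"
        using h m xy comp_assoc v pb_sq by metis
    next
      fix h' assume h': "Dm D h' = Dm D x \<and> Cd D h' = Dm D g \<and> Cp D (Cp D v k) h' = x \<and> Cp D g h' = y"
      have "Cp D u (Cp D k h') = Cp D c y"
        using h' comp_assoc pb_sq by metis
      moreover have "Cp D v (Cp D k h') = x" using h' comp_assoc v pb_sq by metis
      moreover have "Dm D (Cp D k h') = Dm D x" "Cd D (Cp D k h') = Dm D u"
        using h' dom_comp cod_comp pb_sq by metis+
      ultimately have "Cp D k h' = m" using m_unique by blast
      then show "h' = h" using h_unique h' xy by metis
    qed
  qed
qed

end

locale doctrine_struct =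
  fixes D :: "('o, 'm, 'p) doctrine_data"
  assumes doctrine: "doctrine D"
begin

sublocale category_struct D
  using doctrine unfolding doctrine_def by unfold_locales blast

lemma le_refl: "x \<in> Pr D A \<Longrightarrow> Le D A x x"
  using doctrine unfolding doctrine_def by blast

lemma le_trans:
  "x \<in> Pr D A \<Longrightarrow> y \<in> Pr D A \<Longrightarrow> z \<in> Pr D A \<Longrightarrow> Le D A x y \<Longrightarrow> Le D A y z \<Longrightarrow> Le D A x z"
  using doctrine unfolding doctrine_def by blast

lemma le_antisym: "x \<in> Pr D A \<Longrightarrow> y \<in> Pr D A \<Longrightarrow> Le D A x y \<Longrightarrow> Le D A y x \<Longrightarrow> x = y"
  using doctrine unfolding doctrine_def by blast

lemma eq_if_same_lower_bounds:
  assumes "x \<in> Pr D A" and "y \<in> Pr D A" and "\<And>z. z \<in> Pr D A \<Longrightarrow> Le D A z x \<longleftrightarrow> Le D A z y"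
  shows "x = y"
  using assms le_refl le_antisym by blast

lemma reindex_closed: "Cd D f = A \<Longrightarrow> x \<in> Pr D A \<Longrightarrow> Re D f x \<in> Pr D (Dm D f)"
  using doctrine unfolding doctrine_def by blast

lemma reindex_mono:
  "Cd D f = A \<Longrightarrow> x \<in> Pr D A \<Longrightarrow> y \<in> Pr D A \<Longrightarrow> Le D A x y \<Longrightarrow>
    Le D (Dm D f) (Re D f x) (Re D f y)"
  using doctrine unfolding doctrine_def by blast

lemma reindex_comp: "Dm D g = Cd D f \<Longrightarrow> x \<in> Pr D (Cd D g) \<Longrightarrow> Re D (Cp D g f) x = Re D f (Re D g x)"
  using doctrine unfolding doctrine_def by blast

lemma le_right_adjoint_iff:
  assumes adj: "right_adjoint D u P" and x: "x \<in> Pr D (Cd D u)" and y: "y \<in> Pr D (Dm D u)"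
  shows "Le D (Cd D u) x (P y) \<longleftrightarrow> Le D (Dm D u) (Re D u x) y"
proof
  have P: "\<And>z. z \<in> Pr D (Dm D u) \<Longrightarrow> P z \<in> Pr D (Cd D u)"
    using adj unfolding right_adjoint_def by blast
  have ux: "Re D u x \<in> Pr D (Dm D u)" using reindex_closed x by blast
  show "Le D (Dm D u) (Re D u x) y" if "Le D (Cd D u) x (P y)"
  proof -
    have "Le D (Dm D u) (Re D u x) (Re D u (P y))" using reindex_mono that x y P by blast
    moreover have "Le D (Dm D u) (Re D u (P y)) y" using adj y unfolding right_adjoint_def by blast
    ultimately show ?thesis using le_trans ux reindex_closed P y by blast
  qed
  show "Le D (Cd D u) x (P y)" if "Le D (Dm D u) (Re D u x) y"
  proof -
    have "Le D (Cd D u) x (P (Re D u x))" using adj x unfolding right_adjoint_def by blast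
    moreover have "Le D (Cd D u) (P (Re D u x)) (P y)" using adj that ux y unfolding right_adjoint_def by blast
    ultimately show ?thesis using le_trans x P ux y by blast
  qed
qed

end

definition factors_through :: "('o, 'm, 'p) doctrine_data \<Rightarrow> 'm \<Rightarrow> 'm \<Rightarrow> bool" where
  "factors_through D f u \<longleftrightarrow> (\<exists>h. Dm D h = Dm D f \<and> Cd D h = Dm D u \<and> Cp D u h = f)"

locale doctrine_comprehension = doctrine_struct D
  for D :: "('o, 'm, 'p) doctrine_data" +
  fixes tp :: "'o \<Rightarrow> 'p" and cmp :: "'o \<Rightarrow> 'p \<Rightarrow> 'm"
  assumes comprehension: "has_comprehension D tp cmp"
begin

lemma top_closed: "tp A \<in> Pr D A"
  using comprehension unfolding has_comprehension_def by blast

lemma le_top: "x \<in> Pr D A \<Longrightarrow> Le D A x (tp A)"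
  using comprehension unfolding has_comprehension_def by blast

lemma top_le_imp_eq: "x \<in> Pr D A \<Longrightarrow> Le D A (tp A) x \<Longrightarrow> x = tp A"
  using le_antisym top_closed le_top by blast

lemma reindex_top: "Cd D f = A \<Longrightarrow> Re D f (tp A) = tp (Dm D f)"
  using comprehension unfolding has_comprehension_def by blast

lemma cod_compr: "\<alpha> \<in> Pr D A \<Longrightarrow> Cd D (cmp A \<alpha>) = A"
  using comprehension unfolding has_comprehension_def by blast

lemma reindex_compr_self: "\<alpha> \<in> Pr D A \<Longrightarrow> Re D (cmp A \<alpha>) \<alpha> = tp (Dm D (cmp A \<alpha>))"
  using comprehension unfolding has_comprehension_def by blast

lemma compr_universal:
  "\<alpha> \<in> Pr D A \<Longrightarrow> Cd D f = A \<Longrightarrow> Re D f \<alpha> = tp (Dm D f) \<Longrightarrow>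
    \<exists>!h. Dm D h = Dm D f \<and> Cd D h = Dm D (cmp A \<alpha>) \<and> Cp D (cmp A \<alpha>) h = f"
  using comprehension unfolding has_comprehension_def by blast

lemma reindex_compr_comp:
  assumes "\<alpha> \<in> Pr D A" and "Cd D h = Dm D (cmp A \<alpha>)"
  shows "Re D (Cp D (cmp A \<alpha>) h) \<alpha> = tp (Dm D h)"
  using assms reindex_comp[of "cmp A \<alpha>" h \<alpha>] cod_compr reindex_compr_self reindex_top by metis

lemma reindex_eq_top_iff_factors:
  assumes "\<alpha> \<in> Pr D A" and "Cd D f = A"
  shows "Re D f \<alpha> = tp (Dm D f) \<longleftrightarrow> factors_through D f (cmp A \<alpha>)"
  using assms compr_universal reindex_compr_comp unfolding factors_through_def by metis

lemma full_comprehension_iff: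
  "full_comprehension D cmp \<longleftrightarrow>
    (\<forall>A. \<forall>\<alpha>\<in>Pr D A. \<forall>\<beta>\<in>Pr D A. Re D (cmp A \<alpha>) \<beta> = tp (Dm D (cmp A \<alpha>)) \<longrightarrow> Le D A \<alpha> \<beta>)"
  using reindex_eq_top_iff_factors cod_compr
  unfolding full_comprehension_def factors_through_def by metis

lemma compr_monic:
  assumes \<alpha>: "\<alpha> \<in> Pr D A" and "Dm D h = Dm D h'"
    and "Cd D h = Dm D (cmp A \<alpha>)" and "Cd D h' = Dm D (cmp A \<alpha>)"
    and "Cp D (cmp A \<alpha>) h = Cp D (cmp A \<alpha>) h'"
  shows "h = h'"
proof -
  let ?f = "Cp D (cmp A \<alpha>) h"
  have "Cd D ?f = A" "Dm D ?f = Dm D h" using assms cod_comp dom_comp cod_compr by metis+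
  moreover have "Re D ?f \<alpha> = tp (Dm D h)" using reindex_compr_comp assms by blast
  ultimately show ?thesis using compr_universal[OF \<alpha>] assms dom_comp by metis
qed

lemma compr_pullback:
  assumes \<alpha>: "\<alpha> \<in> Pr D (Cd D f)"
  obtains g where "is_pullback D f (cmp (Dm D f) (Re D f \<alpha>)) (cmp (Cd D f) \<alpha>) g"
proof -
  let ?c = "cmp (Cd D f) \<alpha>" and ?k = "cmp (Dm D f) (Re D f \<alpha>)"
  have f\<alpha>: "Re D f \<alpha> \<in> Pr D (Dm D f)" using reindex_closed \<alpha> by blast
  have k: "Cd D ?k = Dm D f" using cod_compr[OF f\<alpha>] .
  have c: "Cd D ?c = Cd D f" using cod_compr[OF \<alpha>] .
  have fk: "Cd D (Cp D f ?k) = Cd D f" "Dm D (Cp D f ?k) = Dm D ?k"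
    using cod_comp dom_comp k by metis+
  have "Re D (Cp D f ?k) \<alpha> = tp (Dm D ?k)"
    using reindex_comp[OF k[symmetric]] \<alpha> reindex_compr_self[OF f\<alpha>] by simp
  then obtain g where g: "Dm D g = Dm D ?k" "Cd D g = Dm D ?c" "Cp D ?c g = Cp D f ?k"
    using reindex_eq_top_iff_factors[OF \<alpha> fk(1)] fk(2) unfolding factors_through_def by auto
  have "is_pullback D f ?k ?c g"
    unfolding is_pullback_def
  proof (intro conjI allI impI)
    show "Dm D f = Cd D ?k" "Dm D ?c = Cd D g" "Cd D f = Cd D ?c" "Dm D ?k = Dm D g"
      "Cp D f ?k = Cp D ?c g"
      using k c g by simp_all
    fix x y assume xy: "Dm D x = Dm D y \<and> Cd D x = Dm D f \<and> Cd D y = Dm D ?c \<and> Cp D f x = Cp D ?c y"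
    have "Re D x (Re D f \<alpha>) = Re D (Cp D ?c y) \<alpha>" using reindex_comp xy \<alpha> by metis
    also have "\<dots> = tp (Dm D x)" using reindex_compr_comp[OF \<alpha>] xy by simp
    finally have "factors_through D x ?k" using reindex_eq_top_iff_factors[OF f\<alpha>] xy by blast
    then obtain h where h: "Dm D h = Dm D x" "Cd D h = Dm D ?k" "Cp D ?k h = x"
      unfolding factors_through_def by blast
    have gh: "Cp D g h = y"
    proof (rule compr_monic[OF \<alpha>])
      show "Dm D (Cp D g h) = Dm D y" "Cd D (Cp D g h) = Dm D ?c"
        using dom_comp cod_comp g h xy by metis+
      have "Cp D ?c (Cp D g h) = Cp D f (Cp D ?k h)" using comp_assoc g h k by metis
      then show "Cp D ?c (Cp D g h) = Cp D ?c y" using h xy by simp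
    qed (use xy in simp)
    show "\<exists>!h. Dm D h = Dm D x \<and> Cd D h = Dm D ?k \<and> Cp D ?k h = x \<and> Cp D g h = y"
    proof (rule ex1I[of _ h])
      fix h' assume "Dm D h' = Dm D x \<and> Cd D h' = Dm D ?k \<and> Cp D ?k h' = x \<and> Cp D g h' = y"
      then show "h' = h" using compr_monic[OF f\<alpha>, of h' h] h by simp
    qed (use h gh in simp)
  qed
  then show thesis ..
qed

end

locale compr_implication = doctrine_comprehension D tp cmp
  for D :: "('o, 'm, 'p) doctrine_data" and tp :: "'o \<Rightarrow> 'p" and cmp :: "'o \<Rightarrow> 'p \<Rightarrow> 'm" +
  fixes Pi :: "'m \<Rightarrow> 'p \<Rightarrow> 'p"
  assumes right_adjoint_compr: "\<alpha> \<in> Pr D A \<Longrightarrow> right_adjoint D (cmp A \<alpha>) (Pi (cmp A \<alpha>))"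
begin

abbreviation imp :: "'o \<Rightarrow> 'p \<Rightarrow> 'p \<Rightarrow> 'p" where
  "imp \<equiv> compr_imp D cmp Pi"

lemma imp_closed:
  assumes "\<alpha> \<in> Pr D A" and "\<beta> \<in> Pr D A"
  shows "imp A \<alpha> \<beta> \<in> Pr D A"
  using assms right_adjoint_compr[of \<alpha> A] reindex_closed cod_compr
  unfolding right_adjoint_def compr_imp_def by metis

lemma le_imp_iff:
  assumes "x \<in> Pr D A" and \<alpha>: "\<alpha> \<in> Pr D A" and "\<beta> \<in> Pr D A"
  shows "Le D A x (imp A \<alpha> \<beta>) \<longleftrightarrow> Le D (Dm D (cmp A \<alpha>)) (Re D (cmp A \<alpha>) x) (Re D (cmp A \<alpha>) \<beta>)"
  using assms le_right_adjoint_iff[OF right_adjoint_compr[OF \<alpha>]] reindex_closed cod_compr[OF \<alpha>]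
  unfolding compr_imp_def by metis

lemma full_comprehension_if_cond_iv_c:
  assumes mp: "cond_iv_c D imp"
  shows "full_comprehension D cmp"
  unfolding full_comprehension_iff
proof (intro allI ballI impI)
  fix A \<alpha> \<beta> assume \<alpha>: "\<alpha> \<in> Pr D A" and \<beta>: "\<beta> \<in> Pr D A"
    and "Re D (cmp A \<alpha>) \<beta> = tp (Dm D (cmp A \<alpha>))"
  then have "Le D A \<alpha> (imp A \<alpha> \<beta>)"
    using le_imp_iff[OF \<alpha> \<alpha> \<beta>] reindex_compr_self[OF \<alpha>] le_refl top_closed by simp
  then show "Le D A \<alpha> \<beta>" using mp \<alpha> \<beta> le_refl[OF \<alpha>] unfolding cond_iv_c_def by blast
qed

text \<open>From \<gamma> \<le> \<phi> the arrow \<lfloor>\<gamma>\<rfloor> factors through \<lfloor>\<phi>\<rfloor>, along which \<lfloor>\<phi>\<rfloor>^*\<gamma> \<le> \<lfloor>\<phi>\<rfloor>^*\<psi>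
  pulls back to \<top> \<le> \<lfloor>\<gamma>\<rfloor>^*\<psi>.\<close>

lemma modus_ponens:
  assumes full: "full_comprehension D cmp"
    and \<gamma>: "\<gamma> \<in> Pr D A" and \<phi>: "\<phi> \<in> Pr D A" and \<psi>: "\<psi> \<in> Pr D A"
    and "Le D A \<gamma> (imp A \<phi> \<psi>)" and "Le D A \<gamma> \<phi>"
  shows "Le D A \<gamma> \<psi>"
proof -
  let ?c\<gamma> = "cmp A \<gamma>" and ?c\<phi> = "cmp A \<phi>"
  have c\<gamma>: "Cd D ?c\<gamma> = A" and c\<phi>: "Cd D ?c\<phi> = A" using cod_compr \<gamma> \<phi> by blast+
  have "Le D (Dm D ?c\<gamma>) (Re D ?c\<gamma> \<gamma>) (Re D ?c\<gamma> \<phi>)" using reindex_mono c\<gamma> \<gamma> \<phi> assms by blast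
  then have "Re D ?c\<gamma> \<phi> = tp (Dm D ?c\<gamma>)"
    using top_le_imp_eq reindex_compr_self[OF \<gamma>] reindex_closed[OF c\<gamma> \<phi>] by simp
  then obtain h where h: "Dm D h = Dm D ?c\<gamma>" "Cd D h = Dm D ?c\<phi>" "Cp D ?c\<phi> h = ?c\<gamma>"
    using reindex_eq_top_iff_factors[OF \<phi> c\<gamma>] unfolding factors_through_def by blast
  have "Le D (Dm D ?c\<phi>) (Re D ?c\<phi> \<gamma>) (Re D ?c\<phi> \<psi>)" using le_imp_iff[OF \<gamma> \<phi> \<psi>] assms by blast
  then have "Le D (Dm D h) (Re D h (Re D ?c\<phi> \<gamma>)) (Re D h (Re D ?c\<phi> \<psi>))"
    using reindex_mono[OF h(2)] reindex_closed[OF c\<phi>] \<gamma> \<psi> by blast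
  moreover have "Re D h (Re D ?c\<phi> \<gamma>) = Re D ?c\<gamma> \<gamma>" "Re D h (Re D ?c\<phi> \<psi>) = Re D ?c\<gamma> \<psi>"
    using reindex_comp h \<gamma> \<psi> c\<phi> by metis+
  ultimately have "Le D (Dm D ?c\<gamma>) (tp (Dm D ?c\<gamma>)) (Re D ?c\<gamma> \<psi>)"
    using reindex_compr_self[OF \<gamma>] h by simp
  then have "Re D ?c\<gamma> \<psi> = tp (Dm D ?c\<gamma>)" using top_le_imp_eq reindex_closed[OF c\<gamma> \<psi>] by blast
  then show ?thesis using full \<gamma> \<psi> unfolding full_comprehension_iff by blast
qed

lemma le_if_imp_eq_top:
  assumes "full_comprehension D cmp" and "\<alpha> \<in> Pr D A" and "\<beta> \<in> Pr D A"
    and "imp A \<alpha> \<beta> = tp A"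
  shows "Le D A \<alpha> \<beta>"
  by (rule modus_ponens[OF assms(1,2,2,3)]) (use assms le_top le_refl in auto)

lemma top_imp_le:
  assumes "full_comprehension D cmp" and "x \<in> Pr D A"
  shows "Le D A (imp A (tp A) x) x"
  by (rule modus_ponens[OF assms(1) imp_closed[OF top_closed assms(2)] top_closed assms(2)])
    (use assms imp_closed[OF top_closed] le_refl le_top in auto)

lemma le_imp_weaken:
  assumes "\<phi> \<in> Pr D A" and "\<psi> \<in> Pr D A"
  shows "Le D A \<phi> (imp A \<psi> \<phi>)"
  using le_imp_iff[OF assms(1,2,1)] le_refl reindex_closed cod_compr assms by blast

lemma le_imp_if_le:
  assumes \<gamma>: "\<gamma> \<in> Pr D A" and \<phi>: "\<phi> \<in> Pr D A" and \<psi>: "\<psi> \<in> Pr D A" and "Le D A \<phi> \<psi>"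
  shows "Le D A \<gamma> (imp A \<phi> \<psi>)"
proof -
  let ?c = "cmp A \<phi>"
  have c: "Cd D ?c = A" using cod_compr \<phi> by blast
  have "Le D (Dm D ?c) (Re D ?c \<gamma>) (tp (Dm D ?c))" using le_top reindex_closed[OF c \<gamma>] by blast
  moreover have "Le D (Dm D ?c) (tp (Dm D ?c)) (Re D ?c \<psi>)"
    using reindex_mono[OF c \<phi> \<psi>] assms reindex_compr_self[OF \<phi>] by simp
  ultimately show ?thesis using le_imp_iff[OF \<gamma> \<phi> \<psi>] le_trans reindex_closed[OF c] \<gamma> \<psi> top_closed by blast
qed

lemma projection_Pi_imp:
  assumes adj: "\<forall>u. is_projection D u \<longrightarrow> right_adjoint D u (Pi u)"
    and bc: "beck_chevalley D (is_projection D) Pi"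
    and u: "is_projection D u" and \<alpha>: "\<alpha> \<in> Pr D (Cd D u)" and \<beta>: "\<beta> \<in> Pr D (Dm D u)"
  shows "Pi u (imp (Dm D u) (Re D u \<alpha>) \<beta>) = imp (Cd D u) \<alpha> (Pi u \<beta>)"
proof -
  let ?A = "Cd D u" and ?Y = "Dm D u" and ?u\<alpha> = "Re D u \<alpha>"
  let ?k = "cmp ?Y ?u\<alpha>" and ?c = "cmp ?A \<alpha>"
  have u\<alpha>: "?u\<alpha> \<in> Pr D ?Y" using reindex_closed \<alpha> by blast
  obtain g where "is_pullback D u ?k ?c g" using compr_pullback[OF \<alpha>] .
  then have pb: "is_pullback D ?c g u ?k" by (rule is_pullback_sym)
  note sq = is_pullbackD(1-5)[OF pb]
  obtain v where "is_product D ?Y v u" using u unfolding is_projection_def by blast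
  then have g: "is_projection D g"
    using is_product_pullback[OF _ pb] unfolding is_projection_def by blast
  have bc_eq: "Re D ?c (Pi u \<beta>) = Pi g (Re D ?k \<beta>)"
    using bc u g pb \<beta> unfolding beck_chevalley_def by blast
  have adj_u: "right_adjoint D u (Pi u)" and adj_g: "right_adjoint D g (Pi g)"
    using adj u g by blast+
  have k\<beta>: "Re D ?k \<beta> \<in> Pr D (Dm D g)" using reindex_closed sq \<beta> by metis
  have u\<beta>: "Pi u \<beta> \<in> Pr D ?A" using adj_u \<beta> unfolding right_adjoint_def by blast
  have imp_Y: "imp ?Y ?u\<alpha> \<beta> \<in> Pr D ?Y" using imp_closed u\<alpha> \<beta> by blast
  show ?thesis
  proof (rule eq_if_same_lower_bounds)
    show "Pi u (imp ?Y ?u\<alpha> \<beta>) \<in> Pr D ?A" using adj_u imp_Y unfolding right_adjoint_def by blast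
    show "imp ?A \<alpha> (Pi u \<beta>) \<in> Pr D ?A" using imp_closed \<alpha> u\<beta> by blast
    fix x assume x: "x \<in> Pr D ?A"
    have cx: "Re D ?c x \<in> Pr D (Cd D g)" using reindex_closed cod_compr \<alpha> x sq by metis
    have gcx: "Re D g (Re D ?c x) = Re D ?k (Re D u x)"
      using reindex_comp sq x cod_compr \<alpha> u\<alpha> by metis
    have "Le D ?A x (Pi u (imp ?Y ?u\<alpha> \<beta>)) \<longleftrightarrow> Le D ?Y (Re D u x) (imp ?Y ?u\<alpha> \<beta>)"
      using le_right_adjoint_iff[OF adj_u x imp_Y] .
    also have "\<dots> \<longleftrightarrow> Le D (Dm D ?k) (Re D ?k (Re D u x)) (Re D ?k \<beta>)"
      using le_imp_iff reindex_closed x u\<alpha> \<beta> by blast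
    also have "\<dots> \<longleftrightarrow> Le D (Dm D g) (Re D g (Re D ?c x)) (Re D ?k \<beta>)"
      using gcx sq by simp
    also have "\<dots> \<longleftrightarrow> Le D (Cd D g) (Re D ?c x) (Pi g (Re D ?k \<beta>))"
      using le_right_adjoint_iff[OF adj_g cx k\<beta>] by simp
    also have "\<dots> \<longleftrightarrow> Le D ?A x (imp ?A \<alpha> (Pi u \<beta>))"
      using le_imp_iff[OF x \<alpha> u\<beta>] bc_eq sq by simp
    finally show "Le D ?A x (Pi u (imp ?Y ?u\<alpha> \<beta>)) \<longleftrightarrow> Le D ?A x (imp ?A \<alpha> (Pi u \<beta>))" .
  qed
qed

end

locale stable_compr_implication = compr_implication +
  assumes restricted_bc: "restricted_beck_chevalley D (compr_class D cmp) Pi"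
begin

lemma reindex_imp:
  assumes \<alpha>: "\<alpha> \<in> Pr D (Cd D f)" and \<beta>: "\<beta> \<in> Pr D (Cd D f)"
  shows "Re D f (imp (Cd D f) \<alpha> \<beta>) = imp (Dm D f) (Re D f \<alpha>) (Re D f \<beta>)"
proof -
  let ?c = "cmp (Cd D f) \<alpha>" and ?k = "cmp (Dm D f) (Re D f \<alpha>)"
  obtain g where pb: "is_pullback D f ?k ?c g" using compr_pullback[OF \<alpha>] .
  note sq = is_pullbackD(1-5)[OF pb]
  have f\<alpha>: "Re D f \<alpha> \<in> Pr D (Dm D f)" using reindex_closed \<alpha> by blast
  have "compr_class D cmp ?c" "compr_class D cmp ?k"
    unfolding compr_class_def using \<alpha> f\<alpha> by blast+
  then have "Re D f (Pi ?c (Re D ?c \<beta>)) = Pi ?k (Re D g (Re D ?c \<beta>))"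
    using restricted_bc pb \<beta> cod_compr[OF \<alpha>] unfolding restricted_beck_chevalley_def by metis
  moreover have "Re D g (Re D ?c \<beta>) = Re D ?k (Re D f \<beta>)"
    using reindex_comp sq \<beta> by metis
  ultimately show ?thesis unfolding compr_imp_def by simp
qed

lemma imp_imp_le_imp:
  assumes full: "full_comprehension D cmp"
    and \<gamma>: "\<gamma> \<in> Pr D A" and \<phi>: "\<phi> \<in> Pr D A" and \<psi>: "\<psi> \<in> Pr D A" and "Le D A \<gamma> \<phi>"
  shows "Le D A (imp A \<gamma> (imp A \<phi> \<psi>)) (imp A \<gamma> \<psi>)"
proof -
  let ?c = "cmp A \<gamma>" let ?B = "Dm D ?c" and ?e = "imp A \<gamma> (imp A \<phi> \<psi>)"
  have c: "Cd D ?c = A" using cod_compr \<gamma> by blast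
  have \<phi>\<psi>: "imp A \<phi> \<psi> \<in> Pr D A" and e: "?e \<in> Pr D A" using imp_closed \<gamma> \<phi> \<psi> by blast+
  have c\<psi>: "Re D ?c \<psi> \<in> Pr D ?B" and ce: "Re D ?c ?e \<in> Pr D ?B" using reindex_closed c \<psi> e by blast+
  have c\<phi>: "Re D ?c \<phi> = tp ?B"
    using reindex_mono[OF c \<gamma> \<phi>] assms reindex_compr_self[OF \<gamma>] top_le_imp_eq reindex_closed[OF c \<phi>]
    by simp
  have "Le D ?B (Re D ?c ?e) (Re D ?c (imp A \<phi> \<psi>))"
    using le_imp_iff[OF e \<gamma> \<phi>\<psi>] le_refl[OF e] by blast
  also have "Re D ?c (imp A \<phi> \<psi>) = imp ?B (tp ?B) (Re D ?c \<psi>)"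
    using reindex_imp[of \<phi> ?c \<psi>] c \<phi> \<psi> c\<phi> by simp
  finally have "Le D ?B (Re D ?c ?e) (Re D ?c \<psi>)"
    using top_imp_le[OF full c\<psi>] le_trans ce c\<psi> imp_closed[OF top_closed c\<psi>] by blast
  then show ?thesis using le_imp_iff[OF e \<gamma> \<psi>] by blast
qed

lemma imp_distrib:
  assumes full: "full_comprehension D cmp"
    and \<gamma>: "\<gamma> \<in> Pr D A" and \<phi>: "\<phi> \<in> Pr D A" and \<psi>: "\<psi> \<in> Pr D A"
  shows "Le D A (imp A \<gamma> (imp A \<phi> \<psi>)) (imp A (imp A \<gamma> \<phi>) (imp A \<gamma> \<psi>))"
proof -
  let ?d = "imp A \<gamma> \<phi>"
  have d: "?d \<in> Pr D A" using imp_closed \<gamma> \<phi> by blast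
  let ?c = "cmp A ?d" let ?B = "Dm D ?c"
  have c: "Cd D ?c = A" using cod_compr d by blast
  have c\<gamma>: "Re D ?c \<gamma> \<in> Pr D ?B" and c\<phi>: "Re D ?c \<phi> \<in> Pr D ?B" and c\<psi>: "Re D ?c \<psi> \<in> Pr D ?B"
    using reindex_closed c \<gamma> \<phi> \<psi> by blast+
  have "imp ?B (Re D ?c \<gamma>) (Re D ?c \<phi>) = tp ?B"
    using reindex_imp[of \<gamma> ?c \<phi>] c \<gamma> \<phi> reindex_compr_self[OF d] by simp
  then have "Le D ?B (Re D ?c \<gamma>) (Re D ?c \<phi>)" using le_if_imp_eq_top[OF full c\<gamma> c\<phi>] by blast
  then have "Le D ?B (imp ?B (Re D ?c \<gamma>) (imp ?B (Re D ?c \<phi>) (Re D ?c \<psi>))) (imp ?B (Re D ?c \<gamma>) (Re D ?c \<psi>))"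
    using imp_imp_le_imp[OF full c\<gamma> c\<phi> c\<psi>] by blast
  moreover have "Re D ?c (imp A \<gamma> (imp A \<phi> \<psi>)) = imp ?B (Re D ?c \<gamma>) (imp ?B (Re D ?c \<phi>) (Re D ?c \<psi>))"
    using reindex_imp[of \<gamma> ?c "imp A \<phi> \<psi>"] reindex_imp[of \<phi> ?c \<psi>] c \<gamma> \<phi> \<psi> imp_closed by simp
  moreover have "Re D ?c (imp A \<gamma> \<psi>) = imp ?B (Re D ?c \<gamma>) (Re D ?c \<psi>)"
    using reindex_imp[of \<gamma> ?c \<psi>] c \<gamma> \<psi> by simp
  ultimately show ?thesis
    using le_imp_iff[OF imp_closed[OF \<gamma> imp_closed[OF \<phi> \<psi>]] d imp_closed[OF \<gamma> \<psi>]] by simp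
qed

lemma implicational_if_full:
  assumes adj: "\<forall>u. is_projection D u \<longrightarrow> right_adjoint D u (Pi u)"
    and bc: "beck_chevalley D (is_projection D) Pi"
    and full: "full_comprehension D cmp"
  shows "implicational D Pi imp"
  unfolding implicational_def
proof (intro conjI allI ballI impI)
  fix A \<gamma> \<phi> \<psi> assume \<gamma>: "\<gamma> \<in> Pr D A" and \<phi>: "\<phi> \<in> Pr D A" and \<psi>: "\<psi> \<in> Pr D A"
  show "imp A \<gamma> \<phi> \<in> Pr D A" using imp_closed \<gamma> \<phi> .
  show "Le D A \<phi> (imp A \<psi> \<phi>)" using le_imp_weaken \<phi> \<psi> .
  show "Le D A (imp A \<gamma> (imp A \<phi> \<psi>)) (imp A (imp A \<gamma> \<phi>) (imp A \<gamma> \<psi>))"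
    using imp_distrib[OF full \<gamma> \<phi> \<psi>] .
  show "Le D A \<gamma> \<psi>" if "Le D A \<gamma> (imp A \<phi> \<psi>) \<and> Le D A \<gamma> \<phi>"
    using modus_ponens[OF full \<gamma> \<phi> \<psi>] that by blast
  show "Le D A \<gamma> (imp A \<phi> \<psi>)" if "Le D A \<phi> \<psi>" using le_imp_if_le \<gamma> \<phi> \<psi> that .
qed (use reindex_imp projection_Pi_imp[OF adj bc] in blast)+

end

theorem mainTheorem3:
  fixes D :: "('o, 'm, 'p) doctrine_data"
    and tp :: "'o \<Rightarrow> 'p" and cmp :: "'o \<Rightarrow> 'p \<Rightarrow> 'm" and Pi :: "'m \<Rightarrow> 'p \<Rightarrow> 'p"
  shows
    "(doctrine D \<and> has_comprehension D tp cmp \<and>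
      (\<forall>A. \<forall>\<alpha>\<in>Pr D A. right_adjoint D (cmp A \<alpha>) (Pi (cmp A \<alpha>))) \<and>
      cond_iv_c D (compr_imp D cmp Pi)
      \<longrightarrow> full_comprehension D cmp)
     \<and>
     (Pi_doctrine D Pi \<and> has_comprehension D tp cmp \<and>
      restricted_Pi_class_doctrine D (compr_class D cmp) Pi
      \<longrightarrow> (implicational D Pi (compr_imp D cmp Pi) \<longleftrightarrow> full_comprehension D cmp))"
proof (intro conjI impI)
  assume h: "doctrine D \<and> has_comprehension D tp cmp \<and>
      (\<forall>A. \<forall>\<alpha>\<in>Pr D A. right_adjoint D (cmp A \<alpha>) (Pi (cmp A \<alpha>))) \<and>
      cond_iv_c D (compr_imp D cmp Pi)"
  then interpret compr_implication D tp cmp Pi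
    by unfold_locales auto
  show "full_comprehension D cmp" using full_comprehension_if_cond_iv_c h by blast
next
  assume h: "Pi_doctrine D Pi \<and> has_comprehension D tp cmp \<and>
      restricted_Pi_class_doctrine D (compr_class D cmp) Pi"
  have adj: "\<forall>u. is_projection D u \<longrightarrow> right_adjoint D u (Pi u)"
    and bc: "beck_chevalley D (is_projection D) Pi"
    using h unfolding Pi_doctrine_def by blast+
  have "\<alpha> \<in> Pr D A \<Longrightarrow> right_adjoint D (cmp A \<alpha>) (Pi (cmp A \<alpha>))" for A \<alpha>
    using h unfolding restricted_Pi_class_doctrine_def compr_class_def by blast
  with h interpret stable_compr_implication D tp cmp Pi
    unfolding Pi_doctrine_def restricted_Pi_class_doctrine_def by unfold_locales auto
  show "implicational D Pi (compr_imp D cmp Pi) \<longleftrightarrow> full_comprehension D cmp"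
  proof
    assume "implicational D Pi (compr_imp D cmp Pi)"
    then show "full_comprehension D cmp"
      using full_comprehension_if_cond_iv_c unfolding implicational_def cond_iv_c_def by blast
  next
    assume "full_comprehension D cmp"
    then show "implicational D Pi (compr_imp D cmp Pi)"
      using implicational_if_full[OF adj bc] by blast
  qed
qed

end
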